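(* Let $E=E_+-E_-$ be a virtual complex, where $E_\pm$ are positive admissible complexes of Hilbert spaces, and assume $E$ is pseudofinite with $\det'(\Delta\,|\,E)=1$. Then the twist $E'$ is a pseudofinite virtual complex and $$\det{}'(\Delta\,|\,E')=\tau_1(E)^{-1}.$$
   Context: A positive complex of Hilbert spaces is $E_0\to E_1\to\cdots$ (zero in negative degrees); it is admissible if every Laplacian $\Delta_p=dd^*+d^*d|_{E_p}$ is admissible (restricted off its kernel): some negative power is trace class and its zeta function $\operatorname{tr}\Delta_p'^{-s}$ continues to a function holomorphic at $0$; $\det'(\Delta_p)=\exp(-\zeta'(0))$. For a virtual complex $E=E_+-E_-$ put $\det'(\Delta|E_k)=\det'(\Delta|(E_+)_k)/\det'(\Delta|(E_-)_k)$. $E$ is pseudofinite if there is $k_0$ with $\det'(\Delta|E_k)=1$ for all $k\ge k_0$; then $\det'(\Delta|E)=\prod_{k\ge0}\det'(\Delta|E_k)^{(-1)^k}$. The torsion is $\tau_1(E)=\prod_{p\ge0}\det'(\Delta|E_p)^{p(-1)^p}$. The twist is the virtual complex $E'=\sum_{k\ge0}(-1)^kE[-k]$, where $E[j]_k=E_{k+j}$; thus its degree-$j$ component is the virtual space $\sum_{k=0}^j(-1)^kE_{j-k}$ (with the direct-sum Laplacians), so $\det'(\Delta|E'_j)=\prod_{k=0}^{j}\det'(\Delta|E_{j-k})^{(-1)^k}$. *)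

theory Defs
  imports Complex_Main
begin

text \<open>
  Abstraction: a positive admissible complex of Hilbert spaces E enters this
  statement only through the sequence of zeta-regularized determinants
  det'(Delta_p), p = 0,1,2,..., of its Laplacians, which are positive reals.
  We therefore represent E by this sequence  D :: nat => real  (with D p > 0).
  A virtual complex E = E_plus - E_minus is represented by the pair of
  sequences, and its degree-wise determinant is the quotient.
\<close>

definition vdet :: "(nat \<Rightarrow> real) \<Rightarrow> (nat \<Rightarrow> real) \<Rightarrow> nat \<Rightarrow> real" where
  "vdet Dp Dm k = Dp k / Dm k"

definition pseudofinite :: "(nat \<Rightarrow> real) \<Rightarrow> bool" where
  "pseudofinite D \<longleftrightarrow> (\<exists>k0. \<forall>k\<ge>k0. D k = 1)"

definition eprod :: "(nat \<Rightarrow> real) \<Rightarrow> real" where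
  "eprod f = (\<Prod>k < (LEAST n. \<forall>k\<ge>n. f k = 1). f k)"

definition det_total :: "(nat \<Rightarrow> real) \<Rightarrow> real" where
  "det_total D = eprod (\<lambda>k. D k powi ((-1::int) ^ k))"

definition torsion1 :: "(nat \<Rightarrow> real) \<Rightarrow> real" where
  "torsion1 D = eprod (\<lambda>p. D p powi (int p * (-1::int) ^ p))"

definition twist :: "(nat \<Rightarrow> real) \<Rightarrow> nat \<Rightarrow> real" where
  "twist D j = (\<Prod>k\<le>j. D (j - k) powi ((-1::int) ^ k))"

end

theory Submission
  imports Defs
begin

text \<open>
  Put a(i) = det'(Delta|E_i)^((-1)^i) and S(j) = a(0) * ... * a(j). Reindexing the twist gives
  det'(Delta|E'_j) = S(j)^((-1)^j). If E_k is trivial for k >= n, then S(j) = det'(Delta|E) = 1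
  for j >= n, so E' is pseudofinite and det'(Delta|E') = S(0) * ... * S(n-1), in which a(i)
  occurs n - i times. Since tau_1(E) is the product of the a(i)^i, multiplying the two gives
  (a(0) * ... * a(n-1))^n = det'(Delta|E)^n = 1.
\<close>

lemma powi_neg_one_power:
  "(x :: 'a :: division_ring) powi ((-1::int) ^ k) = (if even k then x else inverse x)"
  by (cases "even k") (auto simp: power_int_minus)

lemma prod_powi_neg_one_power:
  fixes f :: "'b \<Rightarrow> 'a :: field"
  shows "(\<Prod>i\<in>A. f i powi ((-1::int) ^ k)) = (\<Prod>i\<in>A. f i) powi ((-1::int) ^ k)"
  using prod_inversef[of f A] by (simp add: powi_neg_one_power o_def)

lemma prod_lessThan_eventually_one:
  fixes f :: "nat \<Rightarrow> 'a :: comm_monoid_mult"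
  assumes "\<forall>k\<ge>n. f k = 1" and "n \<le> m"
  shows "(\<Prod>k<m. f k) = (\<Prod>k<n. f k)"
proof -
  have "(\<Prod>k<m. f k) = (\<Prod>k<n. f k) * (\<Prod>k\<in>{n..<m}. f k)"
    using assms(2) by (metis prod.atLeastLessThan_concat lessThan_atLeast0 zero_le)
  also have "(\<Prod>k\<in>{n..<m}. f k) = 1"
    using assms(1) by simp
  finally show ?thesis by simp
qed

lemma eprod_eq_prod_lessThan:
  assumes "\<forall>k\<ge>n. f k = 1"
  shows "eprod f = (\<Prod>k<n. f k)"
proof -
  let ?m = "LEAST n. \<forall>k\<ge>n. f k = 1"
  have "\<forall>k\<ge>?m. f k = 1"
    using assms by (rule LeastI)
  moreover have "?m \<le> n"
    using assms by (rule Least_le)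
  ultimately have "(\<Prod>k<n. f k) = (\<Prod>k<?m. f k)"
    by (rule prod_lessThan_eventually_one)
  then show ?thesis
    unfolding eprod_def by simp
qed

lemma twist_eq_partial_prod_powi:
  "twist d j = (\<Prod>i\<le>j. d i powi ((-1::int) ^ i)) powi ((-1::int) ^ j)"
proof -
  have "twist d j = (\<Prod>i\<le>j. d i powi ((-1::int) ^ (j - i)))"
    unfolding twist_def
    by (rule prod.reindex_bij_witness[where i="\<lambda>i. j - i" and j="\<lambda>i. j - i"]) auto
  also have "\<dots> = (\<Prod>i\<le>j. (d i powi ((-1::int) ^ i)) powi ((-1::int) ^ j))"
  proof (rule prod.cong)
    fix i assume "i \<in> {..j}"
    then have "(-1::int) ^ (j - i) = (-1) ^ i * (-1) ^ j"
      by (auto simp: minus_one_power_iff)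
    then show "d i powi ((-1::int) ^ (j - i)) = (d i powi ((-1::int) ^ i)) powi ((-1::int) ^ j)"
      by (simp add: power_int_mult)
  qed simp
  also have "\<dots> = (\<Prod>i\<le>j. d i powi ((-1::int) ^ i)) powi ((-1::int) ^ j)"
    by (rule prod_powi_neg_one_power)
  finally show ?thesis .
qed

lemma prod_partial_prods:
  fixes a :: "nat \<Rightarrow> 'a :: comm_monoid_mult"
  shows "(\<Prod>j<n. \<Prod>i\<le>j. a i) = (\<Prod>i<n. a i ^ (n - i))"
proof (induction n)
  case (Suc n)
  have "(\<Prod>j<Suc n. \<Prod>i\<le>j. a i) = (\<Prod>j<n. \<Prod>i\<le>j. a i) * (\<Prod>i\<le>n. a i)"
    by (rule prod.lessThan_Suc)
  also have "\<dots> = (\<Prod>i<n. a i ^ (n - i)) * ((\<Prod>i<n. a i) * a n)"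
    by (metis Suc.IH lessThan_Suc_atMost prod.lessThan_Suc)
  also have "\<dots> = (\<Prod>i<n. a i ^ (n - i) * a i) * a n"
    by (simp add: prod.distrib ac_simps)
  also have "\<dots> = (\<Prod>i<Suc n. a i ^ (Suc n - i))"
    by (simp add: Suc_diff_le power_Suc2 del: power_Suc)
  finally show ?case .
qed simp

lemma twist_eventually_one:
  assumes "\<forall>k\<ge>n. d k = 1" and "det_total d = 1"
  shows "\<forall>j\<ge>n. twist d j = 1"
proof (intro allI impI)
  fix j assume "n \<le> j"
  then have "(\<Prod>i\<le>j. d i powi ((-1::int) ^ i)) = det_total d"
    unfolding det_total_def using assms(1)
    by (subst eprod_eq_prod_lessThan[where n="Suc j"]) (auto simp: lessThan_Suc_atMost)
  then show "twist d j = 1"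
    by (simp add: twist_eq_partial_prod_powi assms(2))
qed

lemma det_total_twist_mult_torsion1:
  assumes "\<forall>k\<ge>n. d k = 1" and "det_total d = 1"
  shows "det_total (twist d) * torsion1 d = 1"
proof -
  define a where "a i = d i powi ((-1::int) ^ i)" for i
  have "det_total (twist d) = (\<Prod>j<n. twist d j powi ((-1::int) ^ j))"
    unfolding det_total_def using twist_eventually_one[OF assms]
    by (intro eprod_eq_prod_lessThan) simp
  also have "\<dots> = (\<Prod>j<n. \<Prod>i\<le>j. a i)"
    by (simp add: twist_eq_partial_prod_powi a_def flip: power_int_mult)
  also have "\<dots> = (\<Prod>i<n. a i ^ (n - i))"
    by (rule prod_partial_prods)
  finally have twist: "det_total (twist d) = (\<Prod>i<n. a i ^ (n - i))" .
  have torsion: "torsion1 d = (\<Prod>i<n. a i ^ i)"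
    unfolding torsion1_def using assms(1)
    by (subst eprod_eq_prod_lessThan[where n=n]) (auto simp: a_def power_int_power' mult.commute)
  have "det_total d = (\<Prod>i<n. a i)"
    unfolding det_total_def a_def using assms(1) by (intro eprod_eq_prod_lessThan) simp
  then have "(\<Prod>i<n. a i) = 1"
    using assms(2) by simp
  then have "(\<Prod>i<n. a i ^ (n - i) * a i ^ i) = 1"
    by (simp flip: power_add prod_power_distrib)
  then show ?thesis
    by (simp add: twist torsion prod.distrib)
qed

theorem proposition2p2p1:
  fixes Dp Dm :: "nat \<Rightarrow> real"
  assumes "\<forall>k. Dp k > 0" and "\<forall>k. Dm k > 0"
    and "pseudofinite (vdet Dp Dm)"
    and "det_total (vdet Dp Dm) = 1"
  shows "pseudofinite (twist (vdet Dp Dm))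
    \<and> det_total (twist (vdet Dp Dm)) = inverse (torsion1 (vdet Dp Dm))"
proof -
  obtain n where eventually_trivial: "\<forall>k\<ge>n. vdet Dp Dm k = 1"
    using assms(3) unfolding pseudofinite_def by blast
  have "pseudofinite (twist (vdet Dp Dm))"
    unfolding pseudofinite_def using twist_eventually_one[OF eventually_trivial assms(4)] by blast
  moreover have "det_total (twist (vdet Dp Dm)) = inverse (torsion1 (vdet Dp Dm))"
    using det_total_twist_mult_torsion1[OF eventually_trivial assms(4)] by (metis inverse_unique mult.commute)
  ultimately show ?thesis ..
qed

end
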